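(* Let $\mathcal X$ be a projective arithmetic variety of absolute dimension $n$, $\overline{\mathcal L}$ an ample Hermitian line bundle on $\mathcal X$, $\overline{\mathcal M}$ a Hermitian vector bundle of rank $r$ on $\mathcal X$ and $\mathcal F$ a coherent subsheaf of $\mathcal M$. Let $\varepsilon_{\mathcal F}>0$ be such that for all sufficiently large $d$, $H^0(\mathcal X,\overline{\mathcal L}^{\otimes d}\otimes\mathcal F)$ has a $\mathbb Z$-basis consisting of sections of norm $<e^{-\varepsilon_{\mathcal F}d}$. Write $r_d=\mathrm{rk}_{\mathbb Z}H^0(\mathcal X,\overline{\mathcal L}^{\otimes d}\otimes\mathcal F)$ and \[ C_d=3^{r_d}\big(\pi e^{2\varepsilon_{\mathcal F}d}\big)^{-r_d/2}\int_{\pi e^{2\varepsilon_{\mathcal F}d}}^{+\infty}u^{r_d/2}e^{-u}\,du . \] Then for all sufficiently large $d$, \[ 0<h^1_\theta(\mathcal X,\overline{\mathcal L}^{\otimes d}\otimes\mathcal F)<\exp\big(h^1_\theta(\mathcal X,\overline{\mathcal L}^{\otimes d}\otimes\mathcal F)\big)-1\leq C_d, \] and moreover, for $d$ sufficiently large, $C_d<2\cdot 3^{r_d}e^{-\pi e^{2\varepsilon_{\mathcal F}d}}$.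
   Context: A projective arithmetic variety is an integral separated scheme of finite type, flat and projective over $\mathrm{Spec}\,\mathbb Z$. An ample Hermitian line bundle $\overline{\mathcal L}$: $\mathcal L$ ample, metric semipositive, and for $d\gg0$ $H^0(\mathcal X,\mathcal L^{\otimes d})$ generated by sections of sup norm $<1$. The lattice $H^0(\mathcal X,\overline{\mathcal L}^{\otimes d}\otimes\mathcal F)\subset H^0(\mathcal X,\overline{\mathcal L}^{\otimes d}\otimes\overline{\mathcal M})$ carries the sup norm induced by the metrics. For a lattice $\overline E=(E,\|\cdot\|)$, $h^0_\theta(\overline E)=\log\sum_{v\in E}e^{-\pi\|v\|^2}$ and $h^1_\theta(\overline E)=h^0_\theta(\overline E^\vee)$, where $\overline E^\vee=\mathrm{Hom}_{\mathbb Z}(E,\mathbb Z)$ with the dual norm. One writes $h^i_\theta(\mathcal X,\overline{\mathcal L}^{\otimes d}\otimes\mathcal F)=h^i_\theta(H^0(\mathcal X,\overline{\mathcal L}^{\otimes d}\otimes\mathcal F))$. *)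

theory Defs
  imports "HOL-Analysis.Analysis"
begin

text \<open>A rank-r lattice is modelled by Z^r inside R^r, with vectors encoded as
  functions nat to int / nat to real vanishing at indices \<ge> r.
  The lattice norm (e.g. the sup norm on global sections) is an arbitrary norm on R^r.\<close>

definition zvecs :: "nat \<Rightarrow> (nat \<Rightarrow> int) set" where
  "zvecs r = {v. \<forall>i\<ge>r. v i = 0}"

definition rvecs :: "nat \<Rightarrow> (nat \<Rightarrow> real) set" where
  "rvecs r = {x. \<forall>i\<ge>r. x i = 0}"

definition to_real :: "(nat \<Rightarrow> int) \<Rightarrow> (nat \<Rightarrow> real)" where
  "to_real v = (\<lambda>i. real_of_int (v i))"

definition is_norm_on :: "nat \<Rightarrow> ((nat \<Rightarrow> real) \<Rightarrow> real) \<Rightarrow> bool" where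
  "is_norm_on r N \<longleftrightarrow>
     (\<forall>x\<in>rvecs r. N x \<ge> 0 \<and> (N x = 0 \<longleftrightarrow> x = (\<lambda>_. 0))) \<and>
     (\<forall>x\<in>rvecs r. \<forall>c. N (\<lambda>i. c * x i) = \<bar>c\<bar> * N x) \<and>
     (\<forall>x\<in>rvecs r. \<forall>y\<in>rvecs r. N (\<lambda>i. x i + y i) \<le> N x + N y)"

text \<open>Dual lattice Hom(Z^r,Z) identified with Z^r via the dual basis; dual norm.\<close>
definition dual_norm :: "nat \<Rightarrow> ((nat \<Rightarrow> real) \<Rightarrow> real) \<Rightarrow> (nat \<Rightarrow> real) \<Rightarrow> real" where
  "dual_norm r N \<phi> = Sup {\<bar>\<Sum>i<r. \<phi> i * x i\<bar> | x. x \<in> rvecs r \<and> N x \<le> 1}"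

definition h0_theta :: "nat \<Rightarrow> ((nat \<Rightarrow> real) \<Rightarrow> real) \<Rightarrow> real" where
  "h0_theta r N = ln (infsum (\<lambda>v. exp (- pi * (N (to_real v))\<^sup>2)) (zvecs r))"

definition h1_theta :: "nat \<Rightarrow> ((nat \<Rightarrow> real) \<Rightarrow> real) \<Rightarrow> real" where
  "h1_theta r N = h0_theta r (dual_norm r N)"

definition has_short_basis :: "nat \<Rightarrow> ((nat \<Rightarrow> real) \<Rightarrow> real) \<Rightarrow> real \<Rightarrow> bool" where
  "has_short_basis r N \<delta> \<longleftrightarrow>
     (\<exists>b :: nat \<Rightarrow> nat \<Rightarrow> int.
        (\<forall>j<r. b j \<in> zvecs r \<and> N (to_real (b j)) < \<delta>) \<and>
        (\<forall>v\<in>zvecs r. \<exists>!c :: nat \<Rightarrow> int. (\<forall>j\<ge>r. c j = 0) \<and>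
              v = (\<lambda>i. \<Sum>j<r. c j * b j i)))"

definition C_const :: "nat \<Rightarrow> real \<Rightarrow> real" where
  "C_const r x = 3 ^ r * x powr (- real r / 2) *
                 integral {x..} (\<lambda>u. u powr (real r / 2) * exp (- u))"

end

theory Submission
  imports Defs
begin

text \<open>Let \<open>b\<^sub>1, \<dots>, b\<^sub>r\<close> be a basis of vectors of norm \<open>< \<delta> = exp (-\<epsilon> d)\<close>. A dual vector
  \<open>\<phi>\<close> is determined by the integers \<open>\<phi>(b\<^sub>j)\<close>, and \<open>\<parallel>\<phi>\<parallel>\<^sup>* \<ge> max\<^sub>j |\<phi>(b\<^sub>j)| / \<delta>\<close>. Hence
  \<open>exp h\<^sup>1\<^sub>\<theta> - 1 = \<Sum>\<^sub>\<phi>\<^sub>\<noteq>\<^sub>0 exp (-\<pi> \<parallel>\<phi>\<parallel>\<^sup>*\<^sup>2)\<close> is at most the Gaussian sum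
  \<open>\<Sum>\<^sub>w\<^sub>\<noteq>\<^sub>0 exp (-X |w|\<^sub>\<infinity>\<^sup>2)\<close> over \<open>\<int>\<^sup>r\<close> with \<open>X = \<pi> / \<delta>\<^sup>2\<close>. Counting the \<open>(2k+1)\<^sup>r\<close>
  points of sup norm \<open>\<le> k\<close> shows that this sum is at most \<open>3\<^sup>r exp (-X)\<close> as soon as
  \<open>X \<ge> 2r + 1\<close>, which holds eventually because \<open>r\<close> grows polynomially and \<open>X\<close> exponentially
  in \<open>d\<close>. On the other side, for \<open>x > 2a\<close> the tail \<open>\<integral>\<^sub>x\<^sup>\<infinity> u\<^sup>a exp (-u) du\<close> lies between
  \<open>x\<^sup>a exp (-x)\<close> and \<open>2 x\<^sup>a exp (-x)\<close>, so \<open>3\<^sup>r exp (-X) \<le> C\<^sub>d < 2 \<cdot> 3\<^sup>r exp (-X)\<close>.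
  Finally \<open>h < exp h - 1\<close> for \<open>h > 0\<close>.\<close>

section \<open>Norms on \<open>\<real>\<^sup>r\<close> and dual norms\<close>

lemma zero_in_rvecs [simp]: "(\<lambda>_. 0) \<in> rvecs r"
  by (simp add: rvecs_def)

lemma zero_in_zvecs [simp]: "(\<lambda>_. 0) \<in> zvecs r"
  by (simp add: zvecs_def)

lemma rvecs_diff [simp]: "x \<in> rvecs r \<Longrightarrow> y \<in> rvecs r \<Longrightarrow> (\<lambda>i. x i - y i) \<in> rvecs r"
  by (simp add: rvecs_def)

lemma rvecs_scale [simp]: "x \<in> rvecs r \<Longrightarrow> (\<lambda>i. c * x i) \<in> rvecs r"
  by (simp add: rvecs_def)

lemma
  assumes "is_norm_on r N" and "x \<in> rvecs r"
  shows norm_on_nonneg: "0 \<le> N x"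
    and norm_on_eq_0_iff: "N x = 0 \<longleftrightarrow> x = (\<lambda>_. 0)"
    and norm_on_scale: "N (\<lambda>i. c * x i) = \<bar>c\<bar> * N x"
  using assms unfolding is_norm_on_def by blast+

lemma norm_on_triangle:
  "is_norm_on r N \<Longrightarrow> x \<in> rvecs r \<Longrightarrow> y \<in> rvecs r \<Longrightarrow> N (\<lambda>i. x i + y i) \<le> N x + N y"
  unfolding is_norm_on_def by blast

lemma norm_on_zero: "is_norm_on r N \<Longrightarrow> N (\<lambda>_. 0) = 0"
  using norm_on_eq_0_iff zero_in_rvecs by blast

lemma norm_on_pos: "is_norm_on r N \<Longrightarrow> x \<in> rvecs r \<Longrightarrow> x \<noteq> (\<lambda>_. 0) \<Longrightarrow> 0 < N x"
  using norm_on_nonneg norm_on_eq_0_iff by (metis order_le_less)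

lemma norm_on_diff_le:
  assumes N: "is_norm_on r N" and x: "x \<in> rvecs r" and y: "y \<in> rvecs r"
  shows "\<bar>N y - N x\<bar> \<le> N (\<lambda>i. y i - x i)"
proof -
  have d: "(\<lambda>i. y i - x i) \<in> rvecs r" using x y by simp
  have "N y \<le> N x + N (\<lambda>i. y i - x i)"
    using norm_on_triangle[OF N x d] by simp
  moreover have "N x \<le> N y + N (\<lambda>i. x i - y i)"
    using norm_on_triangle[OF N y rvecs_diff[OF x y]] by simp
  moreover have "N (\<lambda>i. x i - y i) = N (\<lambda>i. y i - x i)"
    using norm_on_scale[OF N d, of "-1"] by simp
  ultimately show ?thesis by linarith
qed

lemma norm_on_le_l1:
  assumes N: "is_norm_on r N"
  obtains M where "0 \<le> M" "\<And>x. x \<in> rvecs r \<Longrightarrow> N x \<le> M * (\<Sum>i<r. \<bar>x i\<bar>)"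
proof -
  define e where "e = (\<lambda>j (i::nat). if i = j then 1 else 0::real)"
  define M where "M = (\<Sum>j<r. N (e j))"
  have e: "e j \<in> rvecs r" if "j < r" for j
    using that by (auto simp: rvecs_def e_def)
  have "0 \<le> M"
    unfolding M_def by (intro sum_nonneg norm_on_nonneg[OF N] e) auto
  have eM: "N (e j) \<le> M" if "j < r" for j
    unfolding M_def using that by (intro member_le_sum norm_on_nonneg[OF N] e) auto
  have partial: "N (\<lambda>i. if i < n then x i else 0) \<le> (\<Sum>i<n. \<bar>x i\<bar> * N (e i))"
    if "n \<le> r" for n x
    using that
  proof (induction n)
    case 0
    then show ?case using norm_on_zero[OF N] by simp
  next
    case (Suc n)
    have p: "(\<lambda>i. if i < n then x i else 0) \<in> rvecs r"
      using Suc by (auto simp: rvecs_def)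
    have q: "(\<lambda>i. x n * e n i) \<in> rvecs r"
      using Suc by (auto simp: rvecs_def e_def)
    have "(\<lambda>i. if i < Suc n then x i else 0) = (\<lambda>i. (if i < n then x i else 0) + x n * e n i)"
      by (auto simp: e_def less_Suc_eq)
    then have "N (\<lambda>i. if i < Suc n then x i else 0)
        \<le> N (\<lambda>i. if i < n then x i else 0) + N (\<lambda>i. x n * e n i)"
      using norm_on_triangle[OF N p q] by simp
    also have "N (\<lambda>i. x n * e n i) = \<bar>x n\<bar> * N (e n)"
      using norm_on_scale[OF N e[of n]] Suc by simp
    finally show ?case using Suc by simp
  qed
  show ?thesis
  proof (rule that[OF \<open>0 \<le> M\<close>])
    fix x assume x: "x \<in> rvecs r"
    then have "x = (\<lambda>i. if i < r then x i else 0)"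
      by (auto simp: rvecs_def)
    then have "N x \<le> (\<Sum>i<r. \<bar>x i\<bar> * N (e i))"
      using partial[of r x] by simp
    also have "\<dots> \<le> (\<Sum>i<r. \<bar>x i\<bar> * M)"
      by (intro sum_mono mult_left_mono eM) auto
    finally show "N x \<le> M * (\<Sum>i<r. \<bar>x i\<bar>)"
      by (simp add: sum_distrib_left mult.commute)
  qed
qed

lemma norm_on_continuous:
  assumes N: "is_norm_on r N"
  shows "continuous_on (rvecs r) N"
  unfolding continuous_on_def
proof
  fix x assume x: "x \<in> rvecs r"
  obtain M where M: "\<And>z. z \<in> rvecs r \<Longrightarrow> N z \<le> M * (\<Sum>i<r. \<bar>z i\<bar>)"
    using norm_on_le_l1[OF N] by blast
  define f where "f = (\<lambda>y::nat \<Rightarrow> real. M * (\<Sum>i<r. \<bar>y i - x i\<bar>))"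
  have bound: "\<bar>N y - N x\<bar> \<le> f y" if "y \<in> rvecs r" for y
    using norm_on_diff_le[OF N x that] M[of "\<lambda>i. y i - x i"] that x by (simp add: f_def)
  have "continuous_on UNIV f"
    unfolding f_def
    by (intro continuous_intros continuous_on_product_then_coordinatewise continuous_on_id)
  then have "(f \<longlongrightarrow> f x) (at x)"
    by (simp add: continuous_on_def)
  then have "(f \<longlongrightarrow> 0) (at x)"
    by (simp add: f_def)
  then have "(f \<longlongrightarrow> 0) (at x within rvecs r)"
    by (rule tendsto_within_subset) simp
  moreover have "\<forall>\<^sub>F y in at x within rvecs r. norm (N y - N x) \<le> f y"
    by (simp add: eventually_at_filter bound)
  ultimately have "((\<lambda>y. N y - N x) \<longlongrightarrow> 0) (at x within rvecs r)"
    by (rule Lim_null_comparison[rotated])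
  then show "(N \<longlongrightarrow> N x) (at x within rvecs r)"
    by (simp add: LIM_zero_iff)
qed

text \<open>All norms on \<open>\<real>\<^sup>r\<close> are equivalent: \<open>N\<close> attains a positive minimum on the compact
  \<open>\<ell>\<^sup>1\<close>-unit sphere.\<close>

lemma norm_on_ge_l1:
  assumes N: "is_norm_on r N"
  obtains c where "0 < c" "\<And>y. y \<in> rvecs r \<Longrightarrow> c * (\<Sum>i<r. \<bar>y i\<bar>) \<le> N y"
proof (cases "r = 0")
  case True
  then show ?thesis using that[of 1] norm_on_nonneg[OF N] by simp
next
  case False
  define S where "S = Pi\<^sub>E UNIV (\<lambda>i. if i < r then {-1..1::real} else {0}) \<inter> {y. (\<Sum>i<r. \<bar>y i\<bar>) = 1}"
  have "compactin (product_topology (\<lambda>i. euclidean) UNIV)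
          (Pi\<^sub>E UNIV (\<lambda>i. if i < r then {-1..1::real} else {0}))"
    by (subst compactin_PiE) auto
  moreover have "closed {y::nat \<Rightarrow> real. (\<Sum>i<r. \<bar>y i\<bar>) = 1}"
    by (intro closed_Collect_eq continuous_intros
          continuous_on_product_then_coordinatewise continuous_on_id)
  ultimately have "compact S"
    unfolding S_def by (intro compact_Int_closed) (simp_all add: euclidean_product_topology)
  have S_rvecs: "S \<subseteq> rvecs r"
    by (auto simp: S_def rvecs_def PiE_iff split: if_splits)
  have "(\<lambda>i. if i = 0 then 1 else 0) \<in> S"
    using False by (auto simp: S_def PiE_iff)
  then obtain y0 where y0: "y0 \<in> S" and min: "\<And>y. y \<in> S \<Longrightarrow> N y0 \<le> N y"
    using continuous_attains_inf[OF \<open>compact S\<close> _ continuous_on_subset[OF norm_on_continuous[OF N] S_rvecs]]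
    by blast
  have "y0 \<noteq> (\<lambda>_. 0)"
    using y0 by (auto simp: S_def)
  then have "0 < N y0"
    using norm_on_pos[OF N] y0 S_rvecs by blast
  then show ?thesis
  proof (rule that)
    fix y assume y: "y \<in> rvecs r"
    define s where "s = (\<Sum>i<r. \<bar>y i\<bar>)"
    show "N y0 * s \<le> N y"
    proof (cases "s = 0")
      case True
      then show ?thesis using norm_on_nonneg[OF N y] by simp
    next
      case False
      then have "0 < s"
        unfolding s_def by (metis sum_nonneg abs_ge_zero order_le_less)
      define z where "z = (\<lambda>i. (1 / s) * y i)"
      have "\<bar>y i\<bar> \<le> s" if "i < r" for i
        unfolding s_def using that by (intro member_le_sum[where f = "\<lambda>i. \<bar>y i\<bar>"]) auto
      then have "\<bar>z i\<bar> \<le> 1" if "i < r" for i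
        using that \<open>0 < s\<close> by (simp add: z_def abs_mult)
      moreover have "z i = 0" if "\<not> i < r" for i
        using that y by (simp add: z_def rvecs_def)
      moreover have "(\<Sum>i<r. \<bar>z i\<bar>) = 1"
        using \<open>0 < s\<close> by (simp add: z_def s_def abs_mult sum_divide_distrib[symmetric])
      ultimately have "z \<in> S"
        by (auto simp: S_def PiE_iff abs_le_iff)
      then have "N y0 \<le> N z"
        by (rule min)
      also have "N z = N y / s"
        using norm_on_scale[OF N y, of "1 / s"] \<open>0 < s\<close> by (simp add: z_def)
      finally show ?thesis
        using \<open>0 < s\<close> by (simp add: field_simps)
    qed
  qed
qed

lemma dual_norm_bdd_above:
  assumes "is_norm_on r N"
  shows "bdd_above {\<bar>\<Sum>i<r. \<phi> i * x i\<bar> | x. x \<in> rvecs r \<and> N x \<le> 1}"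
proof -
  obtain c where c: "0 < c" "\<And>y. y \<in> rvecs r \<Longrightarrow> c * (\<Sum>i<r. \<bar>y i\<bar>) \<le> N y"
    using norm_on_ge_l1[OF assms] by blast
  define A where "A = (\<Sum>i<r. \<bar>\<phi> i\<bar>)"
  show ?thesis
  proof (rule bdd_aboveI)
    fix t assume "t \<in> {\<bar>\<Sum>i<r. \<phi> i * x i\<bar> | x. x \<in> rvecs r \<and> N x \<le> 1}"
    then obtain x where x: "x \<in> rvecs r" "N x \<le> 1" and t: "t = \<bar>\<Sum>i<r. \<phi> i * x i\<bar>"
      by blast
    have "t \<le> (\<Sum>i<r. \<bar>\<phi> i\<bar> * \<bar>x i\<bar>)"
      unfolding t by (rule order_trans[OF sum_abs]) (simp add: abs_mult)
    also have "\<dots> \<le> (\<Sum>i<r. A * \<bar>x i\<bar>)"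
      unfolding A_def
      by (intro sum_mono mult_right_mono member_le_sum[where f = "\<lambda>i. \<bar>\<phi> i\<bar>"]) auto
    also have "\<dots> = A * (\<Sum>i<r. \<bar>x i\<bar>)"
      by (simp add: sum_distrib_left)
    also have "\<dots> \<le> A * (1 / c)"
      using c(2)[OF x(1)] x(2) c(1) by (intro mult_left_mono) (auto simp: A_def field_simps)
    finally show "t \<le> A * (1 / c)" .
  qed
qed

lemma dual_norm_nonneg: "is_norm_on r N \<Longrightarrow> 0 \<le> dual_norm r N \<phi>"
  unfolding dual_norm_def
  by (rule cSup_upper2[OF _ _ dual_norm_bdd_above]) (auto simp: norm_on_zero intro!: exI[of _ "\<lambda>_. 0"])

lemma dual_norm_zero: "is_norm_on r N \<Longrightarrow> dual_norm r N (\<lambda>_. 0) = 0"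
proof -
  assume N: "is_norm_on r N"
  then have "{\<bar>\<Sum>i<r. 0 * x i\<bar> | x. x \<in> rvecs r \<and> N x \<le> 1} = {0::real}"
    by (auto simp: norm_on_zero intro!: exI[of _ "\<lambda>_. 0"])
  then show ?thesis
    by (simp add: dual_norm_def)
qed

lemma dual_norm_ge:
  assumes N: "is_norm_on r N" and y: "y \<in> rvecs r" and pos: "0 < N y"
  shows "\<bar>\<Sum>i<r. \<phi> i * y i\<bar> / N y \<le> dual_norm r N \<phi>"
proof -
  define z where "z = (\<lambda>i. (1 / N y) * y i)"
  have "z \<in> rvecs r"
    unfolding z_def using y by (rule rvecs_scale)
  moreover have "N z = 1"
    using pos norm_on_scale[OF N y, of "1 / N y"] by (simp add: z_def)
  moreover have "\<bar>\<Sum>i<r. \<phi> i * z i\<bar> = \<bar>\<Sum>i<r. \<phi> i * y i\<bar> / N y"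
    using pos by (simp add: z_def sum_divide_distrib[symmetric] abs_divide)
  ultimately show ?thesis
    unfolding dual_norm_def by (intro cSup_upper dual_norm_bdd_above[OF N]) force
qed

section \<open>Counting lattice points by their sup norm\<close>

definition max_abs :: "nat \<Rightarrow> (nat \<Rightarrow> int) \<Rightarrow> nat" where
  "max_abs r w = Max ((\<lambda>j. nat \<bar>w j\<bar>) ` {..<r})"

definition int_box :: "nat \<Rightarrow> nat \<Rightarrow> (nat \<Rightarrow> int) set" where
  "int_box r k = {w \<in> zvecs r. \<forall>j<r. \<bar>w j\<bar> \<le> int k}"

lemma int_box_subset_image:
  "int_box r k \<subseteq> (\<lambda>f i. if i < r then f i else 0) ` Pi\<^sub>E {..<r} (\<lambda>_. {-int k..int k})"
proof
  fix w assume w: "w \<in> int_box r k"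
  then have "w = (\<lambda>i. if i < r then restrict w {..<r} i else 0)"
    by (auto simp: int_box_def zvecs_def)
  moreover have "restrict w {..<r} \<in> Pi\<^sub>E {..<r} (\<lambda>_. {-int k..int k})"
    using w by (auto simp: int_box_def abs_le_iff)
  ultimately show "w \<in> (\<lambda>f i. if i < r then f i else 0) ` Pi\<^sub>E {..<r} (\<lambda>_. {-int k..int k})"
    by blast
qed

lemma finite_int_box: "finite (int_box r k)"
  by (rule finite_subset[OF int_box_subset_image]) (intro finite_imageI finite_PiE; simp)

lemma card_int_box_le: "card (int_box r k) \<le> (2 * k + 1) ^ r"
proof -
  have "card (int_box r k) \<le> card (Pi\<^sub>E {..<r} (\<lambda>_. {-int k..int k}))"
    by (rule order_trans[OF card_mono[OF _ int_box_subset_image] card_image_le])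
      (intro finite_imageI finite_PiE; simp)+
  also have "\<dots> = (2 * k + 1) ^ r"
  proof -
    have "nat (2 * int k + 1) = 2 * k + 1"
      by simp
    then show ?thesis
      by (simp add: card_PiE)
  qed
  finally show ?thesis .
qed

lemma abs_le_max_abs: "j < r \<Longrightarrow> nat \<bar>w j\<bar> \<le> max_abs r w"
  unfolding max_abs_def by (rule Max_ge) auto

lemma max_abs_attained: "0 < r \<Longrightarrow> \<exists>j<r. max_abs r w = nat \<bar>w j\<bar>"
  unfolding max_abs_def by (metis (no_types, lifting) Max_in empty_iff finite_imageI finite_lessThan
      image_iff image_is_empty lessThan_iff)

lemma max_abs_ge_1:
  assumes "w \<in> zvecs r" "w \<noteq> (\<lambda>_. 0)"
  shows "1 \<le> max_abs r w"
proof -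
  obtain j where "w j \<noteq> 0"
    using assms(2) by auto
  moreover from this have "j < r"
    using assms(1) by (rule_tac ccontr) (auto simp: zvecs_def)
  ultimately show ?thesis
    using abs_le_max_abs[of j r w] by linarith
qed

lemma card_max_abs_le:
  assumes "F \<subseteq> zvecs r - {\<lambda>_. 0}"
  shows "card {w \<in> F. max_abs r w \<le> k} \<le> (2 * k + 1) ^ r - 1"
proof -
  have "{w \<in> F. max_abs r w \<le> k} \<subseteq> int_box r k - {\<lambda>_. 0}"
  proof
    fix w assume w: "w \<in> {w \<in> F. max_abs r w \<le> k}"
    then have "\<bar>w j\<bar> \<le> int k" if "j < r" for j
      using abs_le_max_abs[OF that, of w] by auto
    with w assms show "w \<in> int_box r k - {\<lambda>_. 0}"
      unfolding int_box_def by blast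
  qed
  then have "card {w \<in> F. max_abs r w \<le> k} \<le> card (int_box r k - {\<lambda>_. 0})"
    by (intro card_mono) (simp_all add: finite_int_box)
  also have "\<dots> = card (int_box r k) - 1"
    by (simp add: finite_int_box int_box_def zvecs_def)
  also have "\<dots> \<le> (2 * k + 1) ^ r - 1"
    using card_int_box_le by (rule diff_le_mono)
  finally show ?thesis .
qed

text \<open>Bounding \<open>(2k+1)\<^sup>r \<le> e\<^sup>2\<^sup>k\<^sup>r\<close>, the hypothesis \<open>X \<ge> 2r + 1\<close> gives
  \<open>2kr - Xk\<^sup>2 \<le> -X - k\<close>, and \<open>e\<^sup>-\<^sup>1 \<le> 1/2\<close>.\<close>

lemma card_box_exp_le:
  fixes X :: real
  assumes X: "2 * real r + 1 \<le> X" and k: "2 \<le> k"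
  shows "real ((2 * k + 1) ^ r) * exp (- X * (real k)\<^sup>2) \<le> exp (- X) * (1 / 2) ^ k"
proof -
  have "real (2 * k + 1) \<le> exp (2 * real k)"
    using exp_ge_add_one_self[of "2 * real k"] by simp
  then have "real ((2 * k + 1) ^ r) \<le> exp (2 * real k) ^ r"
    by (simp add: power_mono)
  also have "\<dots> = exp (2 * real k * real r)"
    by (simp add: exp_of_nat_mult[symmetric] mult.commute)
  finally have count: "real ((2 * k + 1) ^ r) \<le> exp (2 * real k * real r)" .
  have "2 * real k \<le> real k * real k"
    using k by (intro mult_right_mono) auto
  then have "real k + 1 \<le> (real k)\<^sup>2"
    using k unfolding power2_eq_square by linarith
  then have "X * (real k + 1) \<le> X * (real k)\<^sup>2"
    using X by (intro mult_left_mono) auto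
  moreover have "(2 * real r + 1) * real k \<le> X * real k"
    using X by (intro mult_right_mono) auto
  ultimately have exponent: "2 * real k * real r - X * (real k)\<^sup>2 \<le> - X - real k"
    by (simp add: algebra_simps)
  have "real ((2 * k + 1) ^ r) * exp (- X * (real k)\<^sup>2)
      \<le> exp (2 * real k * real r) * exp (- X * (real k)\<^sup>2)"
    using count by (intro mult_right_mono) auto
  also have "\<dots> \<le> exp (- X - real k)"
    using exponent by (simp add: exp_add[symmetric])
  also have "\<dots> = exp (- X) * exp (- 1) ^ k"
    by (simp add: exp_diff exp_minus exp_of_nat_mult[symmetric] field_simps)
  also have "\<dots> \<le> exp (- X) * (1 / 2) ^ k"
  proof -
    have "exp (- 1 :: real) \<le> 1 / 2"
      using exp_ge_add_one_self[of 1] by (simp add: exp_minus field_simps)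
    then show ?thesis
      by (intro mult_left_mono power_mono) auto
  qed
  finally show ?thesis .
qed

lemma sum_exp_max_abs_le:
  fixes X :: real
  assumes X: "2 * real r + 1 \<le> X" and F: "finite F" "F \<subseteq> zvecs r - {\<lambda>_. 0}"
  shows "(\<Sum>w\<in>F. exp (- X * (real (max_abs r w))\<^sup>2)) \<le> 3 ^ r * exp (- X)"
proof -
  define h where "h = (\<lambda>k::nat. exp (- X * (real k)\<^sup>2))"
  define K where "K = Max (insert 1 (max_abs r ` F))"
  define c where "c = (\<lambda>k. real (card {w \<in> F. max_abs r w = k}))"
  have range: "max_abs r ` F \<subseteq> {1..K}"
    using F max_abs_ge_1 by (force simp: K_def)
  have c1: "c 1 \<le> 3 ^ r - 1"
  proof -
    have "card {w \<in> F. max_abs r w = 1} \<le> card {w \<in> F. max_abs r w \<le> 1}"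
      using F(1) by (intro card_mono) auto
    also have "\<dots> \<le> 3 ^ r - 1"
      using card_max_abs_le[OF F(2), of 1] by simp
    finally have "real (card {w \<in> F. max_abs r w = 1}) \<le> real (3 ^ r - 1 :: nat)"
      by (simp only: of_nat_le_iff)
    also have "\<dots> = 3 ^ r - 1"
      by (simp add: of_nat_diff)
    finally show ?thesis
      by (simp add: c_def)
  qed
  have ck: "c k * h k \<le> exp (- X) * (1 / 2) ^ k" if "2 \<le> k" for k
  proof -
    have "card {w \<in> F. max_abs r w = k} \<le> card {w \<in> F. max_abs r w \<le> k}"
      using F(1) by (intro card_mono) auto
    also have "\<dots> \<le> (2 * k + 1) ^ r"
      using card_max_abs_le[OF F(2), of k] by simp
    finally have "c k \<le> real ((2 * k + 1) ^ r)"
      unfolding c_def by (simp only: of_nat_le_iff)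
    then have "c k * h k \<le> real ((2 * k + 1) ^ r) * h k"
      unfolding h_def by (rule mult_right_mono) simp
    also have "\<dots> \<le> exp (- X) * (1 / 2) ^ k"
      unfolding h_def using card_box_exp_le[OF X that] .
    finally show ?thesis .
  qed
  have "(\<Sum>w\<in>F. h (max_abs r w)) = (\<Sum>k\<in>{1..K}. c k * h k)"
    unfolding c_def by (subst sum.group[OF F(1) _ range, symmetric]) simp_all
  also have "\<dots> = c 1 * h 1 + (\<Sum>k\<in>{2..K}. c k * h k)"
    using Max_ge[of "insert 1 (max_abs r ` F)" 1] F(1)
    by (subst sum.atLeast_Suc_atMost) (auto simp: K_def numeral_2_eq_2)
  also have "\<dots> \<le> (3 ^ r - 1) * exp (- X) + (\<Sum>k\<in>{2..K}. exp (- X) * (1 / 2) ^ k)"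
    using c1 ck by (intro add_mono sum_mono mult_right_mono) (auto simp: h_def)
  also have "\<dots> \<le> (3 ^ r - 1) * exp (- X) + exp (- X) * (1 / 2)"
    by (auto simp: sum_distrib_left[symmetric] sum_gp power2_eq_square)
  also have "\<dots> \<le> 3 ^ r * exp (- X)"
    by (simp add: algebra_simps)
  finally show ?thesis
    by (simp add: h_def)
qed

section \<open>Lattices with a short basis\<close>

definition int_basis :: "nat \<Rightarrow> (nat \<Rightarrow> nat \<Rightarrow> int) \<Rightarrow> bool" where
  "int_basis r b \<longleftrightarrow>
     (\<forall>v\<in>zvecs r. \<exists>!c :: nat \<Rightarrow> int. (\<forall>j\<ge>r. c j = 0) \<and> v = (\<lambda>i. \<Sum>j<r. c j * b j i))"

definition dual_coords :: "nat \<Rightarrow> (nat \<Rightarrow> nat \<Rightarrow> int) \<Rightarrow> (nat \<Rightarrow> int) \<Rightarrow> nat \<Rightarrow> int" where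
  "dual_coords r b \<phi> = (\<lambda>j. if j < r then \<Sum>i<r. \<phi> i * b j i else 0)"

definition unit_zvec :: "nat \<Rightarrow> nat \<Rightarrow> int" where
  "unit_zvec k = (\<lambda>i. if i = k then 1 else 0)"

lemma has_short_basisE:
  assumes "has_short_basis r N \<delta>"
  obtains b where "int_basis r b" "\<And>j. j < r \<Longrightarrow> b j \<in> zvecs r \<and> N (to_real (b j)) < \<delta>"
  using assms unfolding has_short_basis_def int_basis_def by blast

lemma unit_zvec_in_zvecs: "k < r \<Longrightarrow> unit_zvec k \<in> zvecs r"
  by (simp add: unit_zvec_def zvecs_def)

lemma sum_unit_zvec_mult:
  assumes "k < r"
  shows "(\<Sum>j<r. unit_zvec k j * f j) = f k"
proof -
  have "(\<Sum>j<r. unit_zvec k j * f j) = (\<Sum>j<r. if j = k then f j else 0)"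
    by (rule sum.cong) (simp_all add: unit_zvec_def)
  then show ?thesis
    using assms by simp
qed

lemma int_basis_nonzero:
  assumes b: "int_basis r b" and j: "j < r"
  shows "b j \<noteq> (\<lambda>_. 0)"
proof
  assume bj: "b j = (\<lambda>_. 0)"
  define P where "P = (\<lambda>c :: nat \<Rightarrow> int. (\<forall>j\<ge>r. c j = 0) \<and> (\<lambda>_. 0) = (\<lambda>i. \<Sum>j<r. c j * b j i))"
  have "\<exists>!c. P c"
    using b zero_in_zvecs unfolding int_basis_def P_def by blast
  moreover have "P (\<lambda>_. 0)"
    by (simp add: P_def)
  moreover have "P (unit_zvec j)"
    using j bj unit_zvec_in_zvecs[OF j] by (simp add: P_def sum_unit_zvec_mult zvecs_def)
  ultimately have "unit_zvec j = (\<lambda>_. 0)"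
    by blast
  from fun_cong[OF this, of j] show False
    by (simp add: unit_zvec_def)
qed

text \<open>A dual vector is recovered from its dual coordinates: writing \<open>e\<^sub>k = \<Sum>\<^sub>j c\<^sub>j b\<^sub>j\<close> gives
  \<open>\<phi>(e\<^sub>k) = \<Sum>\<^sub>j c\<^sub>j \<phi>(b\<^sub>j)\<close>.\<close>

lemma inj_on_dual_coords:
  assumes b: "int_basis r b"
  shows "inj_on (dual_coords r b) (zvecs r)"
proof (rule inj_onI)
  fix \<phi> \<psi> assume \<phi>: "\<phi> \<in> zvecs r" and \<psi>: "\<psi> \<in> zvecs r"
    and eq: "dual_coords r b \<phi> = dual_coords r b \<psi>"
  show "\<phi> = \<psi>"
  proof
    fix k show "\<phi> k = \<psi> k"
    proof (cases "k < r")
      case True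
      then obtain c where c: "unit_zvec k = (\<lambda>i. \<Sum>j<r. c j * b j i)"
        using b unit_zvec_in_zvecs unfolding int_basis_def by blast
      have recover: "\<xi> k = (\<Sum>j<r. c j * dual_coords r b \<xi> j)" for \<xi>
      proof -
        have "\<xi> k = (\<Sum>i<r. unit_zvec k i * \<xi> i)"
          using True by (simp add: sum_unit_zvec_mult)
        also have "\<dots> = (\<Sum>i<r. \<Sum>j<r. c j * (\<xi> i * b j i))"
          by (simp add: c sum_distrib_left sum_distrib_right mult_ac)
        also have "\<dots> = (\<Sum>j<r. c j * dual_coords r b \<xi> j)"
          by (subst sum.swap) (simp add: dual_coords_def sum_distrib_left)
        finally show ?thesis .
      qed
      show ?thesis
        using recover[of \<phi>] recover[of \<psi>] eq by simp
    next
      case False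
      then show ?thesis
        using \<phi> \<psi> by (simp add: zvecs_def)
    qed
  qed
qed

lemma dual_coords_in_zvecs: "dual_coords r b \<phi> \<in> zvecs r"
  by (simp add: dual_coords_def zvecs_def)

lemma dual_coords_zero: "dual_coords r b (\<lambda>_. 0) = (\<lambda>_. 0)"
  by (rule ext) (simp add: dual_coords_def)

lemma dual_norm_ge_dual_coords:
  assumes N: "is_norm_on r N" and b: "int_basis r b" and j: "j < r"
    and bj: "b j \<in> zvecs r" "N (to_real (b j)) < \<delta>"
  shows "\<bar>real_of_int (dual_coords r b \<phi> j)\<bar> / \<delta> \<le> dual_norm r N (to_real \<phi>)"
proof -
  define y where "y = to_real (b j)"
  have y: "y \<in> rvecs r"
    using bj(1) by (simp add: y_def to_real_def zvecs_def rvecs_def)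
  moreover have "y \<noteq> (\<lambda>_. 0)"
    using int_basis_nonzero[OF b j] by (auto simp: y_def to_real_def fun_eq_iff)
  ultimately have pos: "0 < N y"
    by (rule norm_on_pos[OF N])
  have "(\<Sum>i<r. to_real \<phi> i * y i) = real_of_int (dual_coords r b \<phi> j)"
    using j by (simp add: y_def to_real_def dual_coords_def)
  then have "\<bar>real_of_int (dual_coords r b \<phi> j)\<bar> / N y \<le> dual_norm r N (to_real \<phi>)"
    using dual_norm_ge[OF N y pos, of "to_real \<phi>"] by simp
  moreover have "\<bar>real_of_int (dual_coords r b \<phi> j)\<bar> / \<delta> \<le> \<bar>real_of_int (dual_coords r b \<phi> j)\<bar> / N y"
    using pos bj(2) by (intro divide_left_mono) (auto simp: y_def)
  ultimately show ?thesis
    by linarith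
qed

lemma max_abs_dual_coords_le:
  assumes N: "is_norm_on r N" and "0 < r" and b: "int_basis r b"
    and bj: "\<And>j. j < r \<Longrightarrow> b j \<in> zvecs r \<and> N (to_real (b j)) < \<delta>"
  shows "real (max_abs r (dual_coords r b \<phi>)) / \<delta> \<le> dual_norm r N (to_real \<phi>)"
proof -
  obtain j where j: "j < r" and "max_abs r (dual_coords r b \<phi>) = nat \<bar>dual_coords r b \<phi> j\<bar>"
    using max_abs_attained[OF \<open>0 < r\<close>] by blast
  then have "real (max_abs r (dual_coords r b \<phi>)) = \<bar>real_of_int (dual_coords r b \<phi> j)\<bar>"
    by simp
  then show ?thesis
    using dual_norm_ge_dual_coords[OF N b j] bj[OF j] by simp
qed

section \<open>The theta invariant \<open>h\<^sup>1\<^sub>\<theta>\<close>\<close>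

lemma dual_theta_tail_le:
  fixes \<delta> X :: real
  assumes N: "is_norm_on r N" and r: "0 < r" and \<delta>: "0 < \<delta>" and b: "int_basis r b"
    and bj: "\<And>j. j < r \<Longrightarrow> b j \<in> zvecs r \<and> N (to_real (b j)) < \<delta>"
    and X: "X = pi / \<delta>\<^sup>2" "2 * real r + 1 \<le> X"
  shows "(\<lambda>\<phi>. exp (- pi * (dual_norm r N (to_real \<phi>))\<^sup>2)) summable_on (zvecs r - {\<lambda>_. 0})"
    and "infsum (\<lambda>\<phi>. exp (- pi * (dual_norm r N (to_real \<phi>))\<^sup>2)) (zvecs r - {\<lambda>_. 0})
           \<le> 3 ^ r * exp (- X)"
proof -
  define g where "g = (\<lambda>\<phi>. exp (- pi * (dual_norm r N (to_real \<phi>))\<^sup>2))"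
  define h where "h = (\<lambda>w. exp (- X * (real (max_abs r w))\<^sup>2))"
  define T where "T = dual_coords r b"
  have g_le: "g \<phi> \<le> h (T \<phi>)" for \<phi>
  proof -
    define m where "m = real (max_abs r (T \<phi>))"
    have "m / \<delta> \<le> dual_norm r N (to_real \<phi>)"
      unfolding m_def T_def by (rule max_abs_dual_coords_le[OF N r b bj])
    then have "(m / \<delta>)\<^sup>2 \<le> (dual_norm r N (to_real \<phi>))\<^sup>2"
      using \<delta> by (intro power_mono) (auto simp: m_def)
    then have "pi * (m / \<delta>)\<^sup>2 \<le> pi * (dual_norm r N (to_real \<phi>))\<^sup>2"
      by (rule mult_left_mono) simp
    then have "X * m\<^sup>2 \<le> pi * (dual_norm r N (to_real \<phi>))\<^sup>2"
      using X(1) by (simp add: power_divide)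
    then show ?thesis
      by (simp add: g_def h_def m_def)
  qed
  have T_nonzero: "T ` F \<subseteq> zvecs r - {\<lambda>_. 0}" if "F \<subseteq> zvecs r - {\<lambda>_. 0}" for F
    using that inj_onD[OF inj_on_dual_coords[OF b], of _ "\<lambda>_. 0"]
    by (auto simp: T_def dual_coords_in_zvecs dual_coords_zero)
  have finite_sums: "sum g F \<le> 3 ^ r * exp (- X)"
    if F: "finite F" "F \<subseteq> zvecs r - {\<lambda>_. 0}" for F
  proof -
    have "sum g F \<le> (\<Sum>\<phi>\<in>F. h (T \<phi>))"
      by (intro sum_mono g_le)
    also have "\<dots> = sum h (T ` F)"
      using F inj_on_subset[OF inj_on_dual_coords[OF b]]
      by (subst sum.reindex) (auto simp: T_def)
    also have "\<dots> \<le> 3 ^ r * exp (- X)"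
      unfolding h_def using X(2) F(1) T_nonzero[OF F(2)] by (rule sum_exp_max_abs_le[OF _ finite_imageI])
    finally show ?thesis .
  qed
  show summable: "g summable_on (zvecs r - {\<lambda>_. 0})"
  proof (rule nonneg_bdd_above_summable_on)
    show "bdd_above (sum g ` {F. F \<subseteq> zvecs r - {\<lambda>_. 0} \<and> finite F})"
      using finite_sums by (auto intro!: bdd_aboveI[where M = "3 ^ r * exp (- X)"])
  qed (simp add: g_def)
  show "infsum g (zvecs r - {\<lambda>_. 0}) \<le> 3 ^ r * exp (- X)"
    using summable finite_sums by (rule infsum_le_finite_sums)
qed

lemma h1_theta_eq_ln:
  assumes N: "is_norm_on r N"
    and summable: "(\<lambda>\<phi>. exp (- pi * (dual_norm r N (to_real \<phi>))\<^sup>2)) summable_on (zvecs r - {\<lambda>_. 0})"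
  shows "h1_theta r N
           = ln (1 + infsum (\<lambda>\<phi>. exp (- pi * (dual_norm r N (to_real \<phi>))\<^sup>2)) (zvecs r - {\<lambda>_. 0}))"
proof -
  have "zvecs r = insert (\<lambda>_. 0) (zvecs r - {\<lambda>_. 0})"
    by auto
  moreover have "to_real (\<lambda>_. 0) = (\<lambda>_. 0)"
    by (simp add: to_real_def)
  ultimately show ?thesis
    unfolding h1_theta_def h0_theta_def
    by (subst (1) \<open>zvecs r = _\<close>, subst infsum_insert[OF summable]) (simp_all add: dual_norm_zero[OF N])
qed

lemma h1_theta_bounds:
  assumes N: "is_norm_on r N" and r: "0 < r" and \<delta>: "0 < \<delta>"
    and short: "has_short_basis r N \<delta>" and X: "X = pi / \<delta>\<^sup>2" "2 * real r + 1 \<le> X"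
  shows "0 < h1_theta r N \<and> h1_theta r N < exp (h1_theta r N) - 1
           \<and> exp (h1_theta r N) - 1 \<le> 3 ^ r * exp (- X)"
proof -
  obtain b where b: "int_basis r b" and bj: "\<And>j. j < r \<Longrightarrow> b j \<in> zvecs r \<and> N (to_real (b j)) < \<delta>"
    using has_short_basisE[OF short] by blast
  define g where "g = (\<lambda>\<phi>. exp (- pi * (dual_norm r N (to_real \<phi>))\<^sup>2))"
  define S where "S = infsum g (zvecs r - {\<lambda>_. 0})"
  have summable: "g summable_on (zvecs r - {\<lambda>_. 0})" and "S \<le> 3 ^ r * exp (- X)"
    using dual_theta_tail_le[OF N r \<delta> b bj X] by (simp_all add: g_def S_def)
  have "unit_zvec 0 \<in> zvecs r - {\<lambda>_. 0}"
    using r unit_zvec_in_zvecs[OF r] by (auto simp: unit_zvec_def fun_eq_iff)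
  then have "infsum g {unit_zvec 0} \<le> S"
    unfolding S_def by (intro infsum_mono_neutral summable) (auto simp: g_def)
  then have "0 < S"
    by (simp add: g_def order_less_le_trans[OF exp_gt_zero])
  moreover have "h1_theta r N = ln (1 + S)"
    unfolding S_def g_def by (rule h1_theta_eq_ln[OF N summable[unfolded g_def]])
  ultimately show ?thesis
    using \<open>S \<le> _\<close> ln_add_one_self_less_self[of S] by simp
qed

section \<open>The tail of the Gamma integral\<close>

text \<open>Concavity of \<open>ln\<close> at \<open>x\<close>: \<open>a ln u \<le> a ln x + a (u/x - 1)\<close>.\<close>

lemma powr_exp_le_exp_tail:
  fixes x a u :: real
  assumes x: "0 < x" and a: "0 \<le> a" and u: "x \<le> u"
  shows "u powr a * exp (- u) \<le> x powr a * exp (- x) * exp (- (1 - a / x) * (u - x))"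
proof -
  have "ln (u / x) \<le> u / x - 1"
    using x u by (intro ln_le_minus_one) simp
  then have "a * ln u \<le> a * (ln x + (u / x - 1))"
    using x u a by (intro mult_left_mono) (simp_all add: ln_div)
  then have "a * ln u + - u \<le> a * ln x + - x + - (1 - a / x) * (u - x)"
    using x by (simp add: field_simps)
  moreover have "u powr a * exp (- u) = exp (a * ln u + - u)"
    using x u by (simp add: powr_def mult_exp_exp)
  moreover have "x powr a * exp (- x) * exp (- (1 - a / x) * (u - x))
      = exp (a * ln x + - x + - (1 - a / x) * (u - x))"
    using x by (simp add: powr_def mult_exp_exp)
  ultimately show ?thesis
    by simp
qed

lemma
  fixes x a :: real
  assumes x: "0 < x" and a: "0 \<le> a" and ax: "2 * a < x"
  shows integrable_gamma_tail: "(\<lambda>u. u powr a * exp (- u)) integrable_on {x..}"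
    and gamma_tail_ge: "x powr a * exp (- x) \<le> integral {x..} (\<lambda>u. u powr a * exp (- u))"
    and gamma_tail_less: "integral {x..} (\<lambda>u. u powr a * exp (- u)) < 2 * (x powr a * exp (- x))"
proof -
  define l where "l = 1 - a / x"
  have l: "1 / 2 < l"
    using x ax by (simp add: l_def field_simps)
  define g where "g = (\<lambda>u. x powr a * exp (- x) * exp (- l * (u - x)))"
  have g_integral: "(g has_integral (x powr a * exp (- x) / l)) {x..}"
  proof -
    have "exp (- l * (u - x)) = exp (l * x) * exp (- l * u)" for u
      unfolding exp_add[symmetric] by (simp add: algebra_simps)
    then have g_eq: "g = (\<lambda>u. x powr a * exp (- x) * exp (l * x) * exp (- l * u))"
      by (simp add: g_def mult.assoc)
    have integral: "((\<lambda>u. x powr a * exp (- x) * exp (l * x) * exp (- l * u)) has_integral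
        (x powr a * exp (- x) * exp (l * x) * (exp (- l * x) / l))) {x..}"
      using l by (intro has_integral_mult_right has_integral_exp_minus_to_infinity) auto
    have integral_eq: "x powr a * exp (- x) * exp (l * x) * (exp (- l * x) / l) = x powr a * exp (- x) / l"
      by (simp add: exp_minus)
    show ?thesis
      unfolding g_eq using integral unfolding integral_eq .
  qed
  have bound: "u powr a * exp (- u) \<le> g u" if "x \<le> u" for u
    using powr_exp_le_exp_tail[OF x a, of u] that by (simp add: g_def l_def)
  have "(\<lambda>u. u powr a * exp (- u)) \<in> borel_measurable (lebesgue_on {x..})"
    using x by (intro continuous_imp_measurable_on_sets_lebesgue continuous_intros) auto
  then show int: "(\<lambda>u. u powr a * exp (- u)) integrable_on {x..}"
    by (rule measurable_bounded_by_integrable_imp_integrable)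
      (use g_integral bound x in \<open>auto simp: has_integral_integrable\<close>)
  have "integral {x..} (\<lambda>u. u powr a * exp (- u)) \<le> integral {x..} g"
    by (rule integral_le[OF int]) (use g_integral bound in \<open>auto simp: has_integral_integrable\<close>)
  also have "\<dots> = x powr a * exp (- x) / l"
    using g_integral by (rule integral_unique)
  also have "\<dots> < 2 * (x powr a * exp (- x))"
    using l x by (simp add: field_simps)
  finally show "integral {x..} (\<lambda>u. u powr a * exp (- u)) < 2 * (x powr a * exp (- x))" .
  have const: "((\<lambda>u. x powr a * exp (- 1 * u)) has_integral x powr a * (exp (- 1 * x) / 1)) {x..}"
    by (intro has_integral_mult_right has_integral_exp_minus_to_infinity) auto
  have "x powr a * exp (- x) = integral {x..} (\<lambda>u. x powr a * exp (- 1 * u))"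
    using integral_unique[OF const] by (simp only: mult_minus_left mult_1 div_by_1)
  also have "\<dots> \<le> integral {x..} (\<lambda>u. u powr a * exp (- u))"
    using const int x a by (intro integral_le) (auto simp: has_integral_integrable intro: powr_mono2)
  finally show "x powr a * exp (- x) \<le> integral {x..} (\<lambda>u. u powr a * exp (- u))" .
qed

lemma
  assumes X: "0 < X" and rX: "real r < X"
  shows C_const_ge: "3 ^ r * exp (- X) \<le> C_const r X"
    and C_const_less: "C_const r X < 2 * 3 ^ r * exp (- X)"
proof -
  define a where "a = real r / 2"
  have "0 \<le> a" "2 * a < X"
    using rX by (simp_all add: a_def)
  note gamma = gamma_tail_ge[OF X this] gamma_tail_less[OF X this]
  define I where "I = integral {X..} (\<lambda>u. u powr a * exp (- u))"
  have C: "C_const r X = 3 ^ r * X powr (- a) * I"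
    by (simp add: C_const_def a_def I_def)
  have cancel: "X powr (- a) * X powr a = 1"
    using X by (simp add: powr_add[symmetric])
  have "3 ^ r * exp (- X) = 3 ^ r * X powr (- a) * (X powr a * exp (- X))"
    using cancel by (simp add: algebra_simps)
  also have "\<dots> \<le> 3 ^ r * X powr (- a) * I"
    using gamma(1) unfolding I_def by (intro mult_left_mono) auto
  finally show "3 ^ r * exp (- X) \<le> C_const r X"
    using C by simp
  have "3 ^ r * X powr (- a) * I < 3 ^ r * X powr (- a) * (2 * (X powr a * exp (- X)))"
    using gamma(2) X unfolding I_def by (intro mult_strict_left_mono) auto
  also have "\<dots> = 2 * 3 ^ r * exp (- X)"
    using cancel by (simp add: algebra_simps)
  finally show "C_const r X < 2 * 3 ^ r * exp (- X)"
    using C by simp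
qed

lemma eventually_poly_le_exp:
  fixes A c :: real
  assumes c: "0 < c"
  shows "eventually (\<lambda>d::nat. A * (1 + real d) ^ m \<le> exp (c * real d)) sequentially"
proof -
  define q where "q = (\<lambda>d::nat. (c * (1 + real d)) ^ m / exp (c * (1 + real d)))"
  define B where "B = A * exp c / c ^ m"
  have "filterlim (\<lambda>d::nat. c * (1 + real d)) at_top sequentially"
    using c by (intro filterlim_tendsto_pos_mult_at_top[OF tendsto_const]
        filterlim_tendsto_add_at_top[OF tendsto_const filterlim_real_sequentially])
  then have "(q \<longlongrightarrow> 0) sequentially"
    unfolding q_def by (rule filterlim_compose[OF tendsto_power_div_exp_0])
  then have "((\<lambda>d. B * q d) \<longlongrightarrow> 0) sequentially"
    by (rule tendsto_mult_right_zero)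
  then have "eventually (\<lambda>d. B * q d < 1) sequentially"
    by (rule order_tendstoD) simp
  then show ?thesis
  proof (rule eventually_mono)
    fix d :: nat assume "B * q d < 1"
    moreover have "q d = c ^ m * (1 + real d) ^ m / (exp c * exp (c * real d))"
      unfolding q_def power_mult_distrib by (simp add: distrib_left exp_add)
    then have "A * (1 + real d) ^ m = B * q d * exp (c * real d)"
      using c by (simp add: B_def)
    ultimately show "A * (1 + real d) ^ m \<le> exp (c * real d)"
      by simp
  qed
qed

lemma eventually_rank_le_exp:
  fixes r :: "nat \<Rightarrow> nat" and \<epsilon> K :: real
  assumes eps_pos: "0 < \<epsilon>" and rank_poly: "\<And>d. real (r d) \<le> K * (1 + real d) ^ m"
  shows "eventually (\<lambda>d. 2 * real (r d) + 1 \<le> pi * exp (2 * \<epsilon> * real d)) sequentially"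
proof -
  have "eventually (\<lambda>d. 2 * K * (1 + real d) ^ m \<le> exp (2 * \<epsilon> * real d)) sequentially"
    using eps_pos by (intro eventually_poly_le_exp) simp
  then show ?thesis
  proof (rule eventually_mono)
    fix d assume "2 * K * (1 + real d) ^ m \<le> exp (2 * \<epsilon> * real d)"
    moreover have "1 \<le> exp (2 * \<epsilon> * real d)"
      using eps_pos by simp
    ultimately have "2 * real (r d) + 1 \<le> 2 * exp (2 * \<epsilon> * real d)"
      using rank_poly[of d] by linarith
    also have "\<dots> \<le> pi * exp (2 * \<epsilon> * real d)"
      using pi_gt3 by (intro mult_right_mono) auto
    finally show "2 * real (r d) + 1 \<le> pi * exp (2 * \<epsilon> * real d)" .
  qed
qed

theorem mainTheorem5:
  fixes r :: "nat \<Rightarrow> nat"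
    and N :: "nat \<Rightarrow> (nat \<Rightarrow> real) \<Rightarrow> real"
    and \<epsilon> :: real and K :: real and m :: nat
  assumes norms: "\<And>d. is_norm_on (r d) (N d)"
    and eps_pos: "\<epsilon> > 0"
    and short: "eventually (\<lambda>d. has_short_basis (r d) (N d) (exp (- \<epsilon> * real d))) sequentially"
    and rank_pos: "eventually (\<lambda>d. r d > 0) sequentially"
    and rank_poly: "\<And>d. real (r d) \<le> K * (1 + real d) ^ m"
  shows "eventually (\<lambda>d. 0 < h1_theta (r d) (N d)
                        \<and> h1_theta (r d) (N d) < exp (h1_theta (r d) (N d)) - 1
                        \<and> exp (h1_theta (r d) (N d)) - 1
                             \<le> C_const (r d) (pi * exp (2 * \<epsilon> * real d))) sequentially
       \<and> eventually (\<lambda>d. C_const (r d) (pi * exp (2 * \<epsilon> * real d))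
                        < 2 * 3 ^ (r d) * exp (- pi * exp (2 * \<epsilon> * real d))) sequentially"
proof -
  define X where "X d = pi * exp (2 * \<epsilon> * real d)" for d :: nat
  have X_pos: "0 < X d" for d
    by (simp add: X_def)
  have X_eq: "X d = pi / (exp (- \<epsilon> * real d))\<^sup>2" for d
    by (simp add: X_def power2_eq_square exp_minus mult_exp_exp field_simps)
  have rank_small: "eventually (\<lambda>d. 2 * real (r d) + 1 \<le> X d) sequentially"
    unfolding X_def using eps_pos rank_poly by (rule eventually_rank_le_exp)
  show ?thesis
    unfolding mult_minus_left X_def[symmetric]
  proof
    show "eventually (\<lambda>d. 0 < h1_theta (r d) (N d)
                        \<and> h1_theta (r d) (N d) < exp (h1_theta (r d) (N d)) - 1
                        \<and> exp (h1_theta (r d) (N d)) - 1 \<le> C_const (r d) (X d)) sequentially"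
      using short rank_pos rank_small
    proof eventually_elim
      case (elim d)
      have "3 ^ r d * exp (- X d) \<le> C_const (r d) (X d)"
        using elim(3) by (intro C_const_ge[OF X_pos]) linarith
      then show ?case
        using h1_theta_bounds[OF norms elim(2) exp_gt_zero elim(1) X_eq elim(3)] by linarith
    qed
    show "eventually (\<lambda>d. C_const (r d) (X d) < 2 * 3 ^ (r d) * exp (- X d)) sequentially"
      using rank_small by eventually_elim (rule C_const_less[OF X_pos]; simp)
  qed
qed

end
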